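(* Let $m\ge 2$, let $p\in\mathbb{R}^m$ be a probability vector and let $L(y,g)=\max_{j\in\mathcal{Y}}\{\mathbf{1}[j\ne y]+g_j-g_y\}$ be the multiclass hinge loss. Then $$\inf_{g\in\mathbb{R}^m}\sum_{l=1}^m p_l\,L(l,g)=\min\{1,\;2(1-\max_{y}p_y)\},$$ and the infimum is attained: if $\max_y p_y<\tfrac12$ by every constant vector $g=c\mathbf{1}$, $c\in\mathbb{R}$; and if $p_{y^*}=\max_y p_y\ge\tfrac12$ by $g=c\mathbf{1}+e_{y^*}$ for every $c\in\mathbb{R}$.
   Context: Classes $\mathcal{Y}=\{1,\dots,m\}$; $\mathbf{1}$ is the all-ones vector and $e_y$ the $y$-th standard basis vector of $\mathbb{R}^m$. *)

theory Defs
  imports "HOL-Analysis.Analysis"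
begin

definition hinge_loss :: "'m::finite \<Rightarrow> real ^ 'm \<Rightarrow> real" where
  "hinge_loss y g = (MAX j\<in>UNIV. (if j \<noteq> y then 1 else 0) + g $ j - g $ y)"

definition cond_risk :: "real ^ 'm::finite \<Rightarrow> real ^ 'm \<Rightarrow> real" where
  "cond_risk p g = (\<Sum>l\<in>UNIV. p $ l * hinge_loss l g)"

definition prob_vector :: "real ^ 'm::finite \<Rightarrow> bool" where
  "prob_vector p \<longleftrightarrow> (\<forall>i. p $ i \<ge> 0) \<and> (\<Sum>i\<in>UNIV. p $ i) = 1"

end

theory Submission
  imports Defs
begin

text \<open>Let \<open>k\<close> be a class on which \<open>g\<close> is maximal and \<open>d \<ge> 0\<close> the gap between \<open>g\<^sub>k\<close> and the
  largest other score. Comparing with the \<open>k\<close>-th term gives \<open>L(l, g) \<ge> 1 + d\<close> for \<open>l \<noteq> k\<close>,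
  and comparing with the runner-up gives \<open>L(k, g) \<ge> max 0 (1 - d)\<close>. The resulting lower bound
  \<open>p\<^sub>k max 0 (1 - d) + (1 - p\<^sub>k)(1 + d)\<close> is piecewise linear in \<open>d\<close>, so it is at least its value
  at \<open>d = 0\<close> or \<open>d = 1\<close>, i.e. \<open>min 1 (2(1 - p\<^sub>k))\<close>. The constant vectors and \<open>c\<one> + e\<^sub>y\<^sub>*\<close>
  attain the two values.\<close>

lemma ex_neq_of_card_ge_2:
  fixes y :: "'a::finite"
  assumes "CARD('a) \<ge> 2"
  obtains j where "j \<noteq> y"
proof -
  have "\<not> (UNIV :: 'a set) \<subseteq> {y}"
    using assms card_mono[of "{y}" "UNIV :: 'a set"] by auto
  then show thesis using that by blast
qed

lemma ex_arg_max_on: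
  fixes f :: "'a \<Rightarrow> 'b::linorder"
  assumes "finite S" "S \<noteq> {}"
  obtains k where "k \<in> S" "\<And>i. i \<in> S \<Longrightarrow> f i \<le> f k"
proof -
  have "Max (f ` S) \<in> f ` S" using assms by simp
  then obtain k where "k \<in> S" "f k = Max (f ` S)" by auto
  then show thesis using that assms by simp
qed

lemma hinge_loss_ge: "(if j \<noteq> y then 1 else 0) + g $ j - g $ y \<le> hinge_loss y g"
  unfolding hinge_loss_def by (rule Max_ge) auto

lemma hinge_loss_const:
  assumes "CARD('m::finite) \<ge> 2"
  shows "hinge_loss (y::'m) (\<chi> j. c) = 1"
proof -
  obtain j :: 'm where "j \<noteq> y" using ex_neq_of_card_ge_2[OF assms] .
  then show ?thesis
    unfolding hinge_loss_def by (intro Max_eqI) (auto simp: image_iff intro!: bexI[of _ j])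
qed

lemma hinge_loss_shifted_unit_self:
  "hinge_loss y (\<chi> j. c + (if j = y then 1 else 0)) = 0"
  unfolding hinge_loss_def by (intro Max_eqI) (auto simp: image_iff)

lemma hinge_loss_shifted_unit_other:
  assumes "l \<noteq> y"
  shows "hinge_loss l (\<chi> j. c + (if j = y then 1 else 0)) = 2"
  unfolding hinge_loss_def using assms
  by (intro Max_eqI) (auto simp: image_iff intro!: bexI[of _ y])

lemma prob_vector_sum_remove:
  assumes "prob_vector p"
  shows "(\<Sum>l\<in>UNIV - {k}. p $ l) = 1 - p $ k"
  using assms unfolding prob_vector_def by (simp add: sum_diff1)

lemma prob_vector_le_1:
  assumes "prob_vector p"
  shows "p $ k \<le> 1"
proof -
  have "0 \<le> (\<Sum>l\<in>UNIV - {k}. p $ l)"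
    using assms unfolding prob_vector_def by (intro sum_nonneg) auto
  then show ?thesis using prob_vector_sum_remove[OF assms] by simp
qed

lemma cond_risk_remove:
  "cond_risk p g = p $ k * hinge_loss k g + (\<Sum>l\<in>UNIV - {k}. p $ l * hinge_loss l g)"
  unfolding cond_risk_def by (subst sum.remove[of UNIV k]) auto

lemma cond_risk_const:
  assumes "CARD('m::finite) \<ge> 2" "prob_vector (p::real^'m)"
  shows "cond_risk p (\<chi> j. c) = 1"
  using assms unfolding cond_risk_def prob_vector_def by (simp add: hinge_loss_const)

lemma cond_risk_shifted_unit:
  assumes "prob_vector p"
  shows "cond_risk p (\<chi> j. c + (if j = y then 1 else 0)) = 2 * (1 - p $ y)"
proof -
  have "cond_risk p (\<chi> j. c + (if j = y then 1 else 0)) = (\<Sum>l\<in>UNIV - {y}. p $ l * 2)"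
    by (simp add: cond_risk_remove[of _ _ y] hinge_loss_shifted_unit_self
        hinge_loss_shifted_unit_other)
  also have "\<dots> = 2 * (1 - p $ y)"
    using prob_vector_sum_remove[OF assms] by (simp add: sum_distrib_right[symmetric])
  finally show ?thesis .
qed

lemma piecewise_linear_lower_bound:
  fixes q d h :: real
  assumes "0 \<le> q" "q \<le> 1" "0 \<le> d" "0 \<le> h" "1 - d \<le> h"
  shows "min 1 (2 * (1 - q)) \<le> q * h + (1 - q) * (1 + d)"
proof (cases "d \<le> 1")
  case True
  have "q * (1 - d) \<le> q * h" using assms by (intro mult_left_mono)
  moreover have "min 1 (2 * (1 - q)) \<le> q * (1 - d) + (1 - q) * (1 + d)"
  proof (cases "q \<le> 1/2")
    case True
    then show ?thesis using \<open>0 \<le> d\<close> mult_nonneg_nonneg[of d "1 - 2 * q"]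
      by (simp add: algebra_simps)
  next
    case False
    then show ?thesis using \<open>d \<le> 1\<close> mult_nonneg_nonneg[of "1 - d" "2 * q - 1"]
      by (simp add: algebra_simps)
  qed
  ultimately show ?thesis by linarith
next
  case False
  have "(1 - q) * 2 \<le> (1 - q) * (1 + d)" using False assms by (intro mult_left_mono) auto
  moreover have "0 \<le> q * h" using assms by simp
  ultimately show ?thesis by linarith
qed

lemma cond_risk_lower_bound_at_arg_max:
  assumes "CARD('m::finite) \<ge> 2" "prob_vector (p::real^'m)"
    and k_max: "\<And>i. g $ i \<le> g $ k"
  shows "min 1 (2 * (1 - p $ k)) \<le> cond_risk p g"
proof -
  obtain j where "j \<in> UNIV - {k}" and j_max: "\<And>i. i \<in> UNIV - {k} \<Longrightarrow> g $ i \<le> g $ j"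
  proof (rule ex_arg_max_on[where f = "\<lambda>i. g $ i"])
    obtain j :: 'm where "j \<noteq> k" using ex_neq_of_card_ge_2[OF assms(1)] .
    then show "UNIV - {k} \<noteq> {}" by blast
  qed auto
  define d where "d = g $ k - g $ j"
  have p_nonneg: "\<And>i. 0 \<le> p $ i" using assms(2) unfolding prob_vector_def by auto
  have other: "1 + d \<le> hinge_loss l g" if "l \<noteq> k" for l
    using hinge_loss_ge[of k l g] j_max[of l] that d_def by auto
  have "(1 - p $ k) * (1 + d) = (\<Sum>l\<in>UNIV - {k}. p $ l * (1 + d))"
    by (simp only: sum_distrib_right[symmetric] prob_vector_sum_remove[OF assms(2)])
  also have "\<dots> \<le> (\<Sum>l\<in>UNIV - {k}. p $ l * hinge_loss l g)"
    using other p_nonneg by (intro sum_mono mult_left_mono) auto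
  finally have "p $ k * hinge_loss k g + (1 - p $ k) * (1 + d) \<le> cond_risk p g"
    by (simp add: cond_risk_remove[of _ _ k])
  moreover have "min 1 (2 * (1 - p $ k)) \<le> p $ k * hinge_loss k g + (1 - p $ k) * (1 + d)"
  proof (rule piecewise_linear_lower_bound)
    show "0 \<le> hinge_loss k g" using hinge_loss_ge[of k k g] by simp
    show "1 - d \<le> hinge_loss k g" using hinge_loss_ge[of j k g] \<open>j \<in> UNIV - {k}\<close> d_def by auto
  qed (use p_nonneg prob_vector_le_1[OF assms(2)] k_max d_def in auto)
  ultimately show ?thesis by linarith
qed

lemma cond_risk_lower_bound:
  assumes "CARD('m::finite) \<ge> 2" "prob_vector (p::real^'m)"
  shows "min 1 (2 * (1 - (MAX y\<in>UNIV. p $ y))) \<le> cond_risk p g"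
proof -
  obtain k where "\<And>i. g $ i \<le> g $ k" using ex_arg_max_on[of UNIV "\<lambda>i. g $ i"] by auto
  then have "min 1 (2 * (1 - p $ k)) \<le> cond_risk p g"
    by (rule cond_risk_lower_bound_at_arg_max[OF assms])
  moreover have "p $ k \<le> (MAX y\<in>UNIV. p $ y)" by (rule Max_ge) auto
  then have "min 1 (2 * (1 - (MAX y\<in>UNIV. p $ y))) \<le> min 1 (2 * (1 - p $ k))"
    by (intro min.mono) auto
  ultimately show ?thesis by linarith
qed

theorem mainTheorem6:
  fixes p :: "real ^ 'm::finite"
  assumes "CARD('m) \<ge> 2"
    and "prob_vector p"
  shows "(INF g. cond_risk p g) = min 1 (2 * (1 - (MAX y\<in>UNIV. p $ y)))
    \<and> ((MAX y\<in>UNIV. p $ y) < 1/2 \<longrightarrow>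
         (\<forall>c. cond_risk p (\<chi> j. c) = (INF g. cond_risk p g)))
    \<and> (\<forall>ystar. p $ ystar = (MAX y\<in>UNIV. p $ y) \<and> (MAX y\<in>UNIV. p $ y) \<ge> 1/2 \<longrightarrow>
         (\<forall>c. cond_risk p (\<chi> j. c + (if j = ystar then 1 else 0)) = (INF g. cond_risk p g)))"
proof -
  define M where "M = (MAX y\<in>UNIV. p $ y)"
  have "M \<in> range (\<lambda>y. p $ y)" unfolding M_def by simp
  then obtain ys where ys: "p $ ys = M" by auto
  have "min 1 (2 * (1 - M)) \<in> {cond_risk p (\<chi> j. 0), cond_risk p (\<chi> j. 0 + (if j = ys then 1 else 0))}"
    using cond_risk_const[OF assms] cond_risk_shifted_unit[OF assms(2), of 0 ys] ys
    by (simp add: min_def)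
  then have "min 1 (2 * (1 - M)) \<in> range (cond_risk p)" by blast
  then have inf: "(INF g. cond_risk p g) = min 1 (2 * (1 - M))"
    using cond_risk_lower_bound[OF assms] unfolding M_def by (auto intro: cInf_eq_minimum)
  show ?thesis
    unfolding M_def[symmetric] inf
    using cond_risk_const[OF assms] cond_risk_shifted_unit[OF assms(2)] by simp
qed

end
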